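(* For $m,l,r\in\mathbb{N}$ with $l,r\le m$, \[ [m-l]_q^![m-r]_q^!\,x^{-l}\Delta^{(-m)}(-t)y^{-r}=[l]_q^![r]_q^!\,t^{l+r-m}\,y^{l-m}\widetilde\Delta^{(-m)}(-t)x^{r-m} \] as formal Laurent series in $t$ with coefficients in $\mathbb{V}$.
   Context: $\mathbb{F}$ is a field of characteristic zero, $q\in\mathbb{F}$ nonzero and not a root of unity. $[n]_q=\frac{q^n-q^{-n}}{q-q^{-1}}$, $[n]_q^!=[n]_q[n-1]_q\cdots[1]_q$, $[0]_q^!=1$. $\mathbb{V}$ is the free algebra over $\mathbb{F}$ on letters $x,y$, with basis the words ($\mathbf 1$ the empty word); $t$ is an indeterminate. Put $\bar x=1,\bar y=-1$. A word $a_1\cdots a_n$ is Catalan if $\bar a_1+\dots+\bar a_i\ge0$ for $1\le i\le n-1$ and $\bar a_1+\dots+\bar a_n=0$; $\mathrm{Cat}_n$ is the set of Catalan words of length $2n$. For $m\in\mathbb{Z},n\in\mathbb{N}$, $\Delta^{(m)}_n=\sum_{a_1\cdots a_{2n}\in\mathrm{Cat}_n}\prod_{i=1}^{2n}[\bar a_1+\dots+\bar a_{i-1}+m(\bar a_i+1)/2]_q\,a_1\cdots a_{2n}$ and $\Delta^{(m)}(t)=\sum_{n\in\mathbb{N}}\Delta^{(m)}_nt^n$. $\widetilde\Delta^{(m)}_n$ is obtained from $\Delta^{(m)}_n$ by interchanging the letters $x$ and $y$ in every word, and $\widetilde\Delta^{(m)}(t)=\sum_n\widetilde\Delta^{(m)}_nt^n$.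 Deletion: for a word $w=a_1\cdots a_n$ ($n\ge1$), $x^{-1}w=a_2\cdots a_n$ if $a_1=x$ and $0$ otherwise; $x^{-1}\mathbf 1=0$; similarly $y^{-1}w$ deletes a leading $y$, and $wx^{-1}$, $wy^{-1}$ delete a trailing $x$, resp. $y$ (otherwise $0$). These are extended linearly and coefficientwise to series; for $k\ge1$, $x^{-k}$ (resp. $y^{-k}$, etc.) is the $k$-fold application, and exponent $0$ means the identity. *)

theory Defs
  imports Complex_Main "HOL-Library.Function_Algebras"
begin

datatype letter = X | Y

type_synonym word = "letter list"

(* An element of V is represented by its coefficient function on the word basis.
   (All elements used below are finitely supported.) *)
type_synonym 'a V = "word \<Rightarrow> 'a"

definition qint :: "'a::field \<Rightarrow> int \<Rightarrow> 'a" where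
  "qint q n = (q powi n - q powi (-n)) / (q - inverse q)"

definition qfact :: "'a::field \<Rightarrow> nat \<Rightarrow> 'a" where
  "qfact q n = (\<Prod>i=1..n. qint q (int i))"

definition bar :: "letter \<Rightarrow> int" where
  "bar a = (if a = X then 1 else -1)"

definition psum :: "word \<Rightarrow> nat \<Rightarrow> int" where
  "psum w i = (\<Sum>j<i. bar (w ! j))"

definition catalan :: "word \<Rightarrow> bool" where
  "catalan w \<longleftrightarrow> (\<forall>i. 1 \<le> i \<and> i \<le> length w - 1 \<longrightarrow> psum w i \<ge> 0) \<and> psum w (length w) = 0"

definition Cat :: "nat \<Rightarrow> word set" where
  "Cat n = {w. catalan w \<and> length w = 2 * n}"

definition basis_word :: "word \<Rightarrow> 'a::zero_neq_one V" where
  "basis_word u = (\<lambda>w. if w = u then 1 else 0)"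

definition smult_V :: "'a::times \<Rightarrow> 'a V \<Rightarrow> 'a V" where
  "smult_V c v = (\<lambda>w. c * v w)"

(* Delta^{(m)}_n ; note (\<bar>a_i+1)/2 = 1 if a_i = x and 0 if a_i = y *)
definition Delta :: "'a::field \<Rightarrow> int \<Rightarrow> nat \<Rightarrow> 'a V" where
  "Delta q m n = (\<Sum>u\<in>Cat n.
      smult_V (\<Prod>i=1..2*n. qint q (psum u (i - 1) + (if u ! (i - 1) = X then m else 0)))
              (basis_word u))"

definition swap_letter :: "letter \<Rightarrow> letter" where
  "swap_letter a = (if a = X then Y else X)"

definition Delta_tilde :: "'a::field \<Rightarrow> int \<Rightarrow> nat \<Rightarrow> 'a V" where
  "Delta_tilde q m n = (\<Sum>u\<in>Cat n.
      smult_V (\<Prod>i=1..2*n. qint q (psum u (i - 1) + (if u ! (i - 1) = X then m else 0)))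
              (basis_word (map swap_letter u)))"

(* Deletions, extended linearly: a^{-1} v  and  v a^{-1}.
   Coefficient of w in a^{-1} v is the coefficient of a w in v. *)
definition del_left :: "letter \<Rightarrow> 'a V \<Rightarrow> 'a V" where
  "del_left a v = (\<lambda>w. v (a # w))"

definition del_right :: "letter \<Rightarrow> 'a V \<Rightarrow> 'a V" where
  "del_right a v = (\<lambda>w. v (w @ [a]))"

definition del_left_pow :: "letter \<Rightarrow> nat \<Rightarrow> 'a V \<Rightarrow> 'a V" where
  "del_left_pow a k = (del_left a ^^ k)"

definition del_right_pow :: "letter \<Rightarrow> nat \<Rightarrow> 'a V \<Rightarrow> 'a V" where
  "del_right_pow a k = (del_right a ^^ k)"

(* Formal power series in t over V: nat \<Rightarrow> V (coefficient of t^n).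
   Formal Laurent series in t over V: int \<Rightarrow> V (coefficient of t^N). *)
type_synonym 'a Vps = "nat \<Rightarrow> 'a V"
type_synonym 'a Vls = "int \<Rightarrow> 'a V"

definition ps_neg :: "'a::comm_ring_1 Vps \<Rightarrow> 'a Vps" where
  "ps_neg f = (\<lambda>n. smult_V ((-1) ^ n) (f n))"

definition to_laurent :: "'a::zero Vps \<Rightarrow> 'a Vls" where
  "to_laurent f = (\<lambda>N. if N \<ge> 0 then f (nat N) else (\<lambda>_. 0))"

(* multiplication by t^k, k an integer *)
definition lshift :: "int \<Rightarrow> 'a Vls \<Rightarrow> 'a Vls" where
  "lshift k F = (\<lambda>N. F (N - k))"

definition ls_smult :: "'a::times \<Rightarrow> 'a Vls \<Rightarrow> 'a Vls" where
  "ls_smult c F = (\<lambda>N. smult_V c (F N))"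

definition ps_map :: "('a V \<Rightarrow> 'a V) \<Rightarrow> 'a Vps \<Rightarrow> 'a Vps" where
  "ps_map g f = (\<lambda>n. g (f n))"

definition Delta_ps :: "'a::field \<Rightarrow> int \<Rightarrow> 'a Vps" where
  "Delta_ps q m = Delta q m"

definition Delta_tilde_ps :: "'a::field \<Rightarrow> int \<Rightarrow> 'a Vps" where
  "Delta_tilde_ps q m = Delta_tilde q m"

end

theory Submission
  imports Defs
begin

text \<open>
  Read a word as a lattice path, \<open>x\<close> an up-step and \<open>y\<close> a down-step. The coefficient of a
  Catalan word in \<open>\<Delta>\<close> with parameter \<open>-m\<close> is the product of the weights \<open>[h - m]\<close> of its
  up-steps and \<open>[h]\<close> of its down-steps, \<open>h\<close> being the height a step starts from; it vanishes
  as soon as the path leaves the strip \<open>0 \<le> h \<le> m\<close>. Reflecting the strip (\<open>h \<mapsto> m - h\<close>)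
  and swapping the letters multiplies every step weight by \<open>-1\<close>.
  The coefficient of \<open>w\<close> on the left is that of \<open>x\<^sup>l w y\<^sup>r\<close> in \<open>\<Delta>\<close>. This path climbs from 0
  to \<open>l\<close>, runs \<open>w\<close> from \<open>l\<close> to \<open>r\<close> and descends to 0, its framing steps contributing
  \<open>(-1)\<^sup>l [m]!/[m-l]!\<close> and \<open>[r]!\<close>. On the right, the path \<open>x\<^sup>m\<^sup>-\<^sup>l w' y\<^sup>m\<^sup>-\<^sup>r\<close>, with
  \<open>w'\<close> the letter swap of \<open>w\<close>, runs the reflection of \<open>w\<close>. So both sides are the same
  multiple of the weight of \<open>w\<close>.
\<close>

lemma bar_X [simp]: "bar X = 1" and bar_Y [simp]: "bar Y = -1"
  by (simp_all add: bar_def)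

lemma swap_letter_X [simp]: "swap_letter X = Y" and swap_letter_Y [simp]: "swap_letter Y = X"
  by (simp_all add: swap_letter_def)

lemma swap_letter_comp_swap_letter [simp]: "swap_letter \<circ> swap_letter = id"
  by (simp add: fun_eq_iff swap_letter_def) (metis letter.exhaust)

lemma sum_list_bar_map_swap_letter:
  "sum_list (map (bar \<circ> swap_letter) u) = - sum_list (map bar u)"
proof (induction u)
  case (Cons a u)
  then show ?case by (cases a) simp_all
qed simp

lemma neg_one_power_eq_if_even_add: "even (i + j) \<Longrightarrow> (-1 :: 'a::ring_1) ^ i = (-1) ^ j"
  by (cases "even i") (auto simp: neg_one_even_power neg_one_odd_power)

lemma qint_0 [simp]: "qint q 0 = 0"
  by (simp add: qint_def)

lemma qint_uminus: "qint q (- n) = - qint q n"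
  by (simp add: qint_def minus_divide_left)

lemma qfact_Suc: "qfact q (Suc n) = qint q (int (Suc n)) * qfact q n"
  by (simp add: qfact_def prod.cl_ivl_Suc)

lemma psum_0 [simp]: "psum u 0 = 0"
  by (simp add: psum_def)

lemma psum_Cons_Suc [simp]: "psum (a # u) (Suc i) = bar a + psum u i"
  unfolding psum_def by (subst sum.lessThan_Suc_shift) simp

lemma psum_length: "psum u (length u) = sum_list (map bar u)"
  by (induction u) simp_all

lemma catalan_iff: "catalan u \<longleftrightarrow> (\<forall>i<length u. 0 \<le> psum u i) \<and> sum_list (map bar u) = 0"
proof -
  have "(\<forall>i. 1 \<le> i \<and> i \<le> length u - 1 \<longrightarrow> 0 \<le> psum u i) \<longleftrightarrow> (\<forall>i<length u. 0 \<le> psum u i)"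
  proof (intro iffI allI impI)
    fix i
    assume "\<forall>i. 1 \<le> i \<and> i \<le> length u - 1 \<longrightarrow> 0 \<le> psum u i" and "i < length u"
    then show "0 \<le> psum u i"
      by (cases "i = 0") auto
  next
    fix i
    assume "\<forall>i<length u. 0 \<le> psum u i" and "1 \<le> i \<and> i \<le> length u - 1"
    then show "0 \<le> psum u i"
      by auto
  qed
  then show ?thesis
    by (simp add: catalan_def psum_length)
qed

lemma finite_Cat: "finite (Cat n)"
proof (rule finite_subset)
  show "Cat n \<subseteq> {u. set u \<subseteq> {X, Y} \<and> length u = 2 * n}"
    using letter.exhaust by (auto simp: Cat_def)
  show "finite {u. set u \<subseteq> {X, Y} \<and> length u = 2 * n}"
    by (simp add: finite_lists_length_eq)
qed

lemma sum_fun_apply: "(\<Sum>u\<in>A. f u) x = (\<Sum>u\<in>A. f u x)"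
  by (induction A rule: infinite_finite_induct) simp_all

text \<open>\<open>path_weight q c h u\<close> is the product defining \<open>\<Delta>\<close> with parameter \<open>c\<close>, for the path \<open>u\<close>
  started at height \<open>h\<close>. The guard \<open>0 \<le> h\<close> kills paths that dip below height 0, so that
  \<open>Delta_apply\<close> needs no Catalan condition.\<close>

fun path_weight :: "'a::field \<Rightarrow> int \<Rightarrow> int \<Rightarrow> word \<Rightarrow> 'a" where
  "path_weight q c h [] = 1"
| "path_weight q c h (a # u) =
     (if 0 \<le> h then qint q (h + (if a = X then c else 0)) else 0) * path_weight q c (h + bar a) u"

lemma path_weight_append:
  "path_weight q c h (u @ v) = path_weight q c h u * path_weight q c (h + sum_list (map bar u)) v"
  by (induction u arbitrary: h) (simp_all add: add.assoc)

lemma prod_qint_eq_path_weight: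
  assumes "\<forall>i<length u. 0 \<le> h + psum u i"
  shows "(\<Prod>i<length u. qint q (h + psum u i + (if u ! i = X then c else 0))) = path_weight q c h u"
  using assms
proof (induction u arbitrary: h)
  case (Cons a u)
  have "\<forall>i<length u. 0 \<le> h + bar a + psum u i"
    using Cons.prems by (auto dest: spec[of _ "Suc _"] simp: add.assoc)
  then have "(\<Prod>i<length u. qint q (h + bar a + psum u i + (if u ! i = X then c else 0)))
      = path_weight q c (h + bar a) u"
    by (rule Cons.IH)
  moreover have "0 \<le> h"
    using Cons.prems by (auto dest: spec[of _ 0])
  ultimately show ?case
    by (simp add: prod.lessThan_Suc_shift add.assoc del: prod.lessThan_Suc)
qed simp

lemma path_weight_nonzero_imp_nonneg:
  "path_weight q c h u \<noteq> 0 \<Longrightarrow> i < length u \<Longrightarrow> 0 \<le> h + psum u i"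
proof (induction u arbitrary: h i)
  case (Cons a u)
  have "0 \<le> h" and "path_weight q c (h + bar a) u \<noteq> 0"
    using Cons.prems(1) by (auto split: if_splits)
  show ?case
  proof (cases i)
    case (Suc j)
    then have "0 \<le> h + bar a + psum u j"
      using Cons.IH[of "h + bar a" j] \<open>path_weight q c (h + bar a) u \<noteq> 0\<close> Cons.prems(2) by simp
    then show ?thesis
      using Suc by (simp add: add.assoc)
  qed (simp add: \<open>0 \<le> h\<close>)
qed simp

lemma Delta_apply:
  "Delta q c n z = (if length z = 2 * n \<and> sum_list (map bar z) = 0 then path_weight q c 0 z else 0)"
proof -
  let ?weight = "\<lambda>u. \<Prod>i=1..2*n. qint q (psum u (i - 1) + (if u ! (i - 1) = X then c else 0))"
  have "Delta q c n z = (\<Sum>u\<in>Cat n. if z = u then ?weight u else 0)"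
    unfolding Delta_def smult_V_def basis_word_def sum_fun_apply
    by (intro sum.cong) simp_all
  also have "\<dots> = (if z \<in> Cat n then ?weight z else 0)"
    using finite_Cat by (simp add: sum.delta)
  also have "\<dots> = (if length z = 2 * n \<and> sum_list (map bar z) = 0 then path_weight q c 0 z else 0)"
  proof (cases "z \<in> Cat n")
    case True
    then have "length z = 2 * n" "\<forall>i<length z. 0 \<le> 0 + psum z i" "sum_list (map bar z) = 0"
      by (auto simp: Cat_def catalan_iff)
    moreover have "?weight z = (\<Prod>i<length z. qint q (psum z i + (if z ! i = X then c else 0)))"
      using \<open>length z = 2 * n\<close> by (simp add: prod.atLeast1_atMost_eq atLeast0LessThan)
    ultimately show ?thesis
      using True prod_qint_eq_path_weight[of z 0 q c] by simp
  next
    case False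
    have "path_weight q c 0 z = 0" if "length z = 2 * n" and "sum_list (map bar z) = 0"
    proof -
      from False that obtain i where "i < length z" and "psum z i < 0"
        by (auto simp: Cat_def catalan_iff not_le)
      then show ?thesis
        using path_weight_nonzero_imp_nonneg[of q c 0 z i] by auto
    qed
    with False show ?thesis
      by auto
  qed
  finally show ?thesis .
qed

lemma Delta_tilde_apply: "Delta_tilde q c n z = Delta q c n (map swap_letter z)"
proof -
  have "z = map swap_letter u \<longleftrightarrow> map swap_letter z = u" for u
    by auto
  then show ?thesis
    unfolding Delta_def Delta_tilde_def smult_V_def basis_word_def sum_fun_apply by simp
qed

lemma path_weight_reflect:
  "0 \<le> h \<Longrightarrow> 0 \<le> h' \<Longrightarrow> h + h' = m \<Longrightarrow>
    path_weight q (- m) h' (map swap_letter u) = (-1) ^ length u * path_weight q (- m) h u"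
proof (induction u arbitrary: h h')
  case (Cons a u)
  have "h - m = - h'" and "h' - m = - h"
    using Cons.prems by simp_all
  show ?case
  proof (cases a)
    case X
    show ?thesis
    proof (cases "h' = 0")
      case False
      then have "path_weight q (- m) (h' - 1) (map swap_letter u)
          = (-1) ^ length u * path_weight q (- m) (h + 1) u"
        using Cons.IH[of "h + 1" "h' - 1"] Cons.prems by simp
      then show ?thesis
        using X Cons.prems \<open>h - m = - h'\<close> qint_uminus[of q h'] by simp
    qed (use X Cons.prems in simp)
  next
    case Y
    show ?thesis
    proof (cases "h = 0")
      case False
      then have "path_weight q (- m) (h' + 1) (map swap_letter u)
          = (-1) ^ length u * path_weight q (- m) (h - 1) u"
        using Cons.IH[of "h - 1" "h' + 1"] Cons.prems by simp
      then show ?thesis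
        using Y Cons.prems \<open>h' - m = - h\<close> qint_uminus[of q h] by simp
    qed (use Y Cons.prems in simp)
  qed
qed simp

lemma path_weight_descent: "path_weight q c (int r) (replicate r Y) = qfact q r"
  by (induction r) (simp_all add: qfact_Suc qfact_def)

lemma path_weight_ascent:
  "h + l + k = m \<Longrightarrow>
    qfact q k * path_weight q (- int m) (int h) (replicate l X) = (-1) ^ l * qfact q (l + k)"
proof (induction l arbitrary: h)
  case (Suc l)
  from Suc.prems have "h + 1 + l + k = m"
    by simp
  from Suc.IH[OF this] have IH:
    "qfact q k * path_weight q (- int m) (int h + 1) (replicate l X) = (-1) ^ l * qfact q (l + k)"
    by (simp only: of_nat_add of_nat_1)
  from Suc.prems have "int m - int h = int (Suc l + k)"
    by arith
  then have step: "qint q (int h - int m) = - qint q (int (Suc l + k))"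
    by (metis minus_diff_eq qint_uminus)
  have "qfact q k * path_weight q (- int m) (int h) (replicate (Suc l) X)
      = qint q (int h - int m) * (qfact q k * path_weight q (- int m) (int h + 1) (replicate l X))"
    by (simp add: mult.left_commute)
  also have "\<dots> = - qint q (int (Suc l + k)) * ((-1) ^ l * qfact q (l + k))"
    by (simp only: step IH)
  also have "\<dots> = (-1) ^ Suc l * qfact q (Suc l + k)"
    by (simp add: qfact_Suc)
  finally show ?case .
qed simp

lemma path_weight_framed:
  assumes "l \<le> m" and "int l + sum_list (map bar w) = int r"
  shows "qfact q (m - l) * path_weight q (- int m) 0 (replicate l X @ w @ replicate r Y)
    = (-1) ^ l * qfact q m * path_weight q (- int m) (int l) w * qfact q r"
  using path_weight_ascent[of 0 l "m - l" m q] assms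
  by (simp add: path_weight_append path_weight_descent sum_list_replicate)

lemma to_laurent_ps_neg_Delta_apply:
  "to_laurent (ps_neg (Delta_ps q c)) N z =
    (if int (length z) = 2 * N \<and> sum_list (map bar z) = 0
     then (-1) ^ (length z div 2) * path_weight q c 0 z else 0)"
  by (cases "0 \<le> N") (auto simp: to_laurent_def ps_neg_def smult_V_def Delta_ps_def Delta_apply)

lemma to_laurent_ps_neg_Delta_tilde_apply:
  "to_laurent (ps_neg (Delta_tilde_ps q c)) N z =
    to_laurent (ps_neg (Delta_ps q c)) N (map swap_letter z)"
  by (simp add: to_laurent_def ps_neg_def smult_V_def Delta_ps_def Delta_tilde_ps_def Delta_tilde_apply)

lemma del_left_pow_apply: "del_left_pow a k v w = v (replicate k a @ w)"
  unfolding del_left_pow_def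
  by (induction k arbitrary: v w) (simp_all add: funpow_Suc_right del_left_def del: funpow.simps)

lemma del_right_pow_apply: "del_right_pow a k v w = v (w @ replicate k a)"
  unfolding del_right_pow_def
  by (induction k arbitrary: v w)
    (simp_all add: funpow_Suc_right del_right_def replicate_append_same del: funpow.simps)

lemma to_laurent_ps_map_deletions:
  "to_laurent (ps_map (\<lambda>v. del_left_pow a k (del_right_pow b j v)) F) N w =
    to_laurent F N (replicate k a @ w @ replicate j b)"
  by (simp add: to_laurent_def ps_map_def del_left_pow_apply del_right_pow_apply)

lemma path_weight_framed_reflect:
  fixes q :: "'a::field"
  assumes "l \<le> m" and "r \<le> m" and "int l + sum_list (map bar w) = int r"
  shows "qfact q (m - l) * qfact q (m - r) *
      path_weight q (- int m) 0 (replicate l X @ w @ replicate r Y)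
    = (-1) ^ (m + length w) * (qfact q l * qfact q r *
      path_weight q (- int m) 0 (replicate (m - l) X @ map swap_letter w @ replicate (m - r) Y))"
proof -
  define u where "u = replicate l X @ w @ replicate r Y"
  define v where "v = replicate (m - l) X @ map swap_letter w @ replicate (m - r) Y"
  define W where "W = path_weight q (- int m) (int l) w"
  define K where "K = qfact q m * W * qfact q (m - r)"
  have weight_u: "qfact q (m - l) * path_weight q (- int m) 0 u = (-1) ^ l * qfact q m * W * qfact q r"
    unfolding u_def W_def using assms(1,3) by (rule path_weight_framed)
  have "path_weight q (- int m) (int (m - l)) (map swap_letter w) = (-1) ^ length w * W"
    unfolding W_def using assms(1) by (intro path_weight_reflect) (simp_all add: of_nat_diff)
  moreover have "qfact q (m - (m - l)) * path_weight q (- int m) 0 v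
    = (-1) ^ (m - l) * qfact q m * path_weight q (- int m) (int (m - l)) (map swap_letter w) *
      qfact q (m - r)"
    unfolding v_def using assms
    by (intro path_weight_framed) (simp_all add: sum_list_bar_map_swap_letter of_nat_diff)
  ultimately have weight_v: "qfact q l * path_weight q (- int m) 0 v = (-1) ^ (m - l + length w) * K"
    using assms(1) by (simp only: diff_diff_cancel K_def power_add ac_simps)
  have "l + (m + length w + (m - l + length w)) = 2 * (m + length w)"
    using assms(1) by simp
  then have "even (l + (m + length w + (m - l + length w)))"
    by (simp only: dvd_triv_left)
  then have sign: "(-1 :: 'a) ^ l = (-1) ^ (m + length w + (m - l + length w))"
    by (rule neg_one_power_eq_if_even_add)
  have "qfact q (m - l) * qfact q (m - r) * path_weight q (- int m) 0 u
      = qfact q (m - r) * (qfact q (m - l) * path_weight q (- int m) 0 u)"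
    by (simp only: ac_simps)
  also have "\<dots> = (-1) ^ l * K * qfact q r"
    by (simp only: weight_u) (simp only: K_def ac_simps)
  also have "\<dots> = (-1) ^ (m + length w) * ((-1) ^ (m - l + length w) * K) * qfact q r"
    by (simp only: sign power_add mult.assoc)
  also have "\<dots> = (-1) ^ (m + length w) * (qfact q r * (qfact q l * path_weight q (- int m) 0 v))"
    by (simp only: weight_v) (simp only: ac_simps)
  finally show ?thesis
    unfolding u_def v_def by (simp only: ac_simps)
qed

lemma to_laurent_ps_neg_Delta_transfer:
  fixes q :: "'a::field"
  assumes "length z + length z' = 2 * k"
    and "int (length z') = 2 * N' \<longleftrightarrow> int (length z) = 2 * N"
    and "sum_list (map bar z') = - sum_list (map bar z)"
    and "sum_list (map bar z) = 0 \<Longrightarrow>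
      e * path_weight q c 0 z = (-1) ^ k * (e' * path_weight q c 0 z')"
  shows "e * to_laurent (ps_neg (Delta_ps q c)) N z = e' * to_laurent (ps_neg (Delta_ps q c)) N' z'"
proof (cases "int (length z) = 2 * N \<and> sum_list (map bar z) = 0")
  case False
  with assms(2,3) have "\<not> (int (length z') = 2 * N' \<and> sum_list (map bar z') = 0)"
    by simp
  with False show ?thesis
    unfolding to_laurent_ps_neg_Delta_apply by (simp only: if_False mult_zero_right)
next
  case True
  define a where "a = length z div 2"
  define b where "b = length z' div 2"
  from True assms(2,3) have "int (length z') = 2 * N' \<and> sum_list (map bar z') = 0"
    by simp
  with True have coeffs: "to_laurent (ps_neg (Delta_ps q c)) N z = (-1) ^ a * path_weight q c 0 z"
    "to_laurent (ps_neg (Delta_ps q c)) N' z' = (-1) ^ b * path_weight q c 0 z'"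
    unfolding to_laurent_ps_neg_Delta_apply a_def b_def by simp_all
  from True have "even (length z)"
    by (metis dvd_triv_left even_of_nat)
  with assms(1) have "even (length z')"
    by (metis dvd_triv_left even_add)
  with \<open>even (length z)\<close> assms(1) have "a + k + b = 2 * k"
    unfolding a_def b_def by (elim evenE) simp
  then have "even (a + k + b)"
    by (simp only: dvd_triv_left)
  then have sign: "(-1 :: 'a) ^ (a + k) = (-1) ^ b"
    by (rule neg_one_power_eq_if_even_add)
  have "e * ((-1) ^ a * path_weight q c 0 z) = (-1) ^ a * (e * path_weight q c 0 z)"
    by (simp only: ac_simps)
  also have "\<dots> = (-1) ^ a * ((-1) ^ k * (e' * path_weight q c 0 z'))"
    using True assms(4) by simp
  also have "\<dots> = e' * ((-1) ^ b * path_weight q c 0 z')"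
    by (simp only: sign mult.assoc [symmetric] power_add [symmetric]) (simp only: ac_simps)
  finally show ?thesis
    by (simp only: coeffs)
qed

lemma to_laurent_ps_neg_Delta_framed_reflect:
  fixes q :: "'a::field"
  assumes "l \<le> m" and "r \<le> m"
  shows "qfact q (m - l) * qfact q (m - r) *
      to_laurent (ps_neg (Delta_ps q (- int m))) N (replicate l X @ w @ replicate r Y)
    = qfact q l * qfact q r *
      to_laurent (ps_neg (Delta_ps q (- int m))) (N - (int l + int r - int m))
        (replicate (m - l) X @ map swap_letter w @ replicate (m - r) Y)"
proof -
  define u where "u = replicate l X @ w @ replicate r Y"
  define v where "v = replicate (m - l) X @ map swap_letter w @ replicate (m - r) Y"
  have "length u + length v = 2 * (m + length w)"
    using assms by (simp add: u_def v_def)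
  moreover from this have "int (length v) = 2 * (N - (int l + int r - int m))
      \<longleftrightarrow> int (length u) = 2 * N"
    by (simp add: u_def) arith
  moreover have "sum_list (map bar v) = - sum_list (map bar u)"
    using assms by (simp add: u_def v_def sum_list_replicate sum_list_bar_map_swap_letter of_nat_diff)
  moreover have "qfact q (m - l) * qfact q (m - r) * path_weight q (- int m) 0 u
      = (-1) ^ (m + length w) * (qfact q l * qfact q r * path_weight q (- int m) 0 v)"
    if "sum_list (map bar u) = 0"
  proof -
    from that have "int l + sum_list (map bar w) = int r"
      by (simp add: u_def sum_list_replicate)
    with assms show ?thesis
      unfolding u_def v_def by (rule path_weight_framed_reflect)
  qed
  ultimately show ?thesis
    unfolding u_def [symmetric] v_def [symmetric] by (rule to_laurent_ps_neg_Delta_transfer)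
qed

theorem lemma6p5:
  fixes q :: "'a::field_char_0" and m l r :: nat
  assumes "q \<noteq> 0" and "\<forall>n>0. q ^ n \<noteq> 1"
    and "l \<le> m" and "r \<le> m"
  shows "ls_smult (qfact q (m - l) * qfact q (m - r))
           (to_laurent (ps_map (\<lambda>v. del_left_pow X l (del_right_pow Y r v))
                                (ps_neg (Delta_ps q (- int m)))))
       = ls_smult (qfact q l * qfact q r)
           (lshift (int l + int r - int m)
             (to_laurent (ps_map (\<lambda>v. del_left_pow Y (m - l) (del_right_pow X (m - r) v))
                                  (ps_neg (Delta_tilde_ps q (- int m))))))"
  by (intro ext)
    (simp add: ls_smult_def smult_V_def lshift_def to_laurent_ps_map_deletions
      to_laurent_ps_neg_Delta_tilde_apply to_laurent_ps_neg_Delta_framed_reflect [OF assms(3,4)])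

end
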